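(* Let $d\ge2$ be an integer, $p^*=1-1/d$, and for integers $0\le w\le d-1$ and $p\in(0,1)$ let $$T_1(d,w,p)=\frac{d-w}{\ln\left(\frac{1}{1+p^d-p^w}\right)}.$$ Then for every integer $w$ with $0\le w\le d-1$, $T_1(d,w,p^* )\le T_1(d,d-1,p^* )$. *)

theory Defs
  imports Complex_Main
begin

definition T1 :: "nat \<Rightarrow> nat \<Rightarrow> real \<Rightarrow> real" where
  "T1 d w p = real (d - w) / ln (1 / (1 + p ^ d - p ^ w))"

end

theory Submission
  imports Defs
begin

text \<open>Put \<open>a = p^(d-1) - p^d\<close> and \<open>b = p^w - p^d\<close>, so that
  \<open>T1 d w p = (d-w) / -ln (1-b)\<close> and \<open>T1 d (d-1) p = 1 / -ln (1-a)\<close>. Telescoping,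
  \<open>b\<close> is a sum of \<open>d-w\<close> gaps \<open>p^k - p^(k+1)\<close>, each at least the last one \<open>a\<close>;
  hence \<open>1 - b \<le> 1 - (d-w) a \<le> (1-a)^(d-w)\<close> by Bernoulli's inequality, and taking
  logarithms gives the claim. Nothing about \<open>p = 1 - 1/d\<close> is used beyond \<open>0 < p < 1\<close>.\<close>

lemma mult_power_gap_le_power_diff:
  fixes p :: real
  assumes "0 \<le> p" "p \<le> 1"
  shows "real (Suc j) * (p ^ (n + j) - p ^ (n + Suc j)) \<le> p ^ n - p ^ (n + Suc j)"
proof (induction j)
  case 0
  then show ?case by simp
next
  case (Suc j)
  have "p ^ (n + Suc j) \<le> p ^ (n + j)"
    using assms by (intro power_decreasing) auto
  then have "p * (p ^ (n + j) - p ^ (n + Suc j)) \<le> p ^ (n + j) - p ^ (n + Suc j)"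
    using assms by (intro mult_left_le_one_le) auto
  then have "p ^ (n + Suc j) - p ^ (n + Suc (Suc j)) \<le> p ^ (n + j) - p ^ (n + Suc j)"
    by (simp add: algebra_simps)
  then have "real (Suc j) * (p ^ (n + Suc j) - p ^ (n + Suc (Suc j)))
      \<le> real (Suc j) * (p ^ (n + j) - p ^ (n + Suc j))"
    by (intro mult_left_mono) auto
  with Suc.IH show ?case
    by (simp add: algebra_simps)
qed

lemma ln_one_minus_le_mult_ln_one_minus:
  fixes a b :: real
  assumes "0 \<le> a" "a < 1" "b < 1" "real k * a \<le> b"
  shows "ln (1 - b) \<le> real k * ln (1 - a)"
proof -
  have "1 - b \<le> 1 + real k * (- a)"
    using assms(4) by simp
  also have "\<dots> \<le> (1 + - a) ^ k"
    using assms(2) by (intro Bernoulli_inequality) simp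
  finally have "ln (1 - b) \<le> ln ((1 - a) ^ k)"
    using assms(3) by simp
  also have "\<dots> = real k * ln (1 - a)"
    using assms(2) by (simp add: ln_realpow)
  finally show ?thesis .
qed

lemma T1_le_T1_pred:
  fixes p :: real
  assumes "0 < p" "p < 1" "w < d"
  shows "T1 d w p \<le> T1 d (d - 1) p"
proof -
  obtain j where d: "d = w + Suc j"
    using assms(3) by (metis add_Suc_right less_imp_Suc_add)
  then have j: "d - w = Suc j" and d1: "d - 1 = w + j" and d_last: "d - (d - 1) = 1"
    by simp_all
  define a where "a = p ^ (d - 1) - p ^ d"
  define b where "b = p ^ w - p ^ d"
  have a_eq: "a = (1 - p) * p ^ (d - 1)"
    unfolding a_def d1 d by (simp add: algebra_simps)
  have pd1: "p ^ (d - 1) \<le> 1" and pw: "p ^ w \<le> 1" and pd: "0 < p ^ d"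
    using assms by (simp_all add: power_le_one)
  have a_pos: "0 < a"
    using assms unfolding a_eq by simp
  have "a \<le> 1 - p"
    using assms pd1 unfolding a_eq by (intro mult_left_le) auto
  then have a_lt1: "a < 1"
    using assms by simp
  have b_lt1: "b < 1"
    using pw pd unfolding b_def by linarith
  have "real (Suc j) * a \<le> b"
    using mult_power_gap_le_power_diff[of p j w] assms unfolding a_def b_def d1 d by simp
  then have gap: "ln (1 - b) \<le> real (Suc j) * ln (1 - a)"
    using a_pos a_lt1 b_lt1 by (intro ln_one_minus_le_mult_ln_one_minus) auto
  have ln_a: "ln (1 - a) < 0"
    using a_pos a_lt1 by simp
  then have ln_b: "ln (1 - b) < 0"
    using gap mult_pos_neg[of "real (Suc j)" "ln (1 - a)"] by linarith
  have "T1 d w p = real (Suc j) / - ln (1 - b)"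
    unfolding T1_def j using b_lt1 by (simp add: b_def ln_div)
  also have "\<dots> \<le> 1 / - ln (1 - a)"
    using gap ln_a ln_b by (simp add: divide_simps)
  also have "\<dots> = T1 d (d - 1) p"
    unfolding T1_def d_last using a_lt1 by (simp add: a_def ln_div)
  finally show ?thesis .
qed

theorem lemma8:
  fixes d w :: nat
  assumes "d \<ge> 2" and "w \<le> d - 1"
  shows "T1 d w (1 - 1 / real d) \<le> T1 d (d - 1) (1 - 1 / real d)"
  using assms by (intro T1_le_T1_pred) auto

end
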